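(* For all $l\in\mathbb{N}$ the coefficients of the expansion in the context satisfy $$\tilde c_{4l-3,\,1-2l}=0,\qquad \tilde c_{4l-1,\,-2l}=\Big(-\frac14\Big)^{l-1}l\,\tilde c_{3,-2}^{\,l}=-\frac{l\,b^{2l}(a^2+1)^l}{4^{2l-1}}.$$ Equivalently, $\sum_{n\ge0}\tilde c_{2n-1,-n}x^n=\dfrac{Cx^2}{(1+Cx^2/4)^2}$ with $C=\tilde c_{3,-2}=-b^2(a^2+1)/4$.
   Context: Consider the degenerate third Painlevé equation with $\varepsilon=+1$: $u''=\frac{(u')^2}{u}-\frac{u'}{\tau}+\frac{1}{\tau}(-8u^2+2ab)+\frac{b^2}{u}$, where $b\in\mathbb{R}\setminus\{0\}$, $a\in\mathbb{C}$. It has a one-parameter family of solutions, defined for $|\arg\tau|<\pi$ with the principal branch of $\ln$, admitting the expansion (convergent near $\tau=0$) $$u(\tau)=\sum_{k=0}^{\infty}\tau^{2k-1}\sum_{m=-2\lfloor k/2\rfloor}^{\infty}\tilde c_{2k-1,m}(\ln\tau)^{-m},\qquad \tilde c_{-1,0}=\tilde c_{-1,1}=0,\ \tilde c_{-1,2}=-\tfrac14,$$ where $\tilde c_{-1,3}\in\mathbb{C}$ is a free parameter and all other coefficients $\tilde c_{2k-1,m}$ are uniquely determined by $\tilde c_{-1,3}$, $a$, $b$ by substituting the expansion into the equation (coefficients with $m<-2\lfloor k/2\rfloor$ are zero). *)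

theory Defs
  imports Complex_Main
begin

text \<open>A coefficient family c k m stands for the coefficient of tau^(2k-1) (ln tau)^(-m).
  More generally, a graded series F :: nat => int => complex stands for
  sum_k tau^(p0 + 2k) sum_m F k m (ln tau)^(-m), where in every component k only
  finitely many negative m occur (m >= -k).\<close>

text \<open>Product of two graded series (Cauchy product in k, Laurent product in m).
  The m-window is exact for series whose k-th component is supported in m >= -k.\<close>
definition gconv :: "(nat \<Rightarrow> int \<Rightarrow> complex) \<Rightarrow> (nat \<Rightarrow> int \<Rightarrow> complex) \<Rightarrow> nat \<Rightarrow> int \<Rightarrow> complex" where
  "gconv F G n m = (\<Sum>k\<le>n. \<Sum>i\<in>{- int n .. m + int n}. F k i * G (n - k) (m - i))"

text \<open>The Euler operator theta = tau d/dtau on u = sum_k tau^(2k-1) sum_m c k m (ln tau)^(-m):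
  theta (tau^p L^(-m)) = p tau^p L^(-m) - m tau^p L^(-m-1).\<close>
definition theta_op :: "(nat \<Rightarrow> int \<Rightarrow> complex) \<Rightarrow> nat \<Rightarrow> int \<Rightarrow> complex" where
  "theta_op F k m = (2 * of_nat k - 1) * F k m - of_int (m - 1) * F k (m - 1)"

text \<open>The formal degenerate PIII (eps = +1), multiplied by tau^2 u:
  u theta^2 u - (theta u)^2 = tau (-8 u^3 + 2 a b u) + b^2 tau^2.
  Coefficient of tau^(2n-2) (ln tau)^(-m).\<close>
definition dP3_formal :: "complex \<Rightarrow> real \<Rightarrow> (nat \<Rightarrow> int \<Rightarrow> complex) \<Rightarrow> bool" where
  "dP3_formal a b c \<longleftrightarrow>
     (\<forall>n m. gconv c (theta_op (theta_op c)) n m - gconv (theta_op c) (theta_op c) n m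
        = - 8 * gconv (gconv c c) c n m
          + (if n \<ge> 1 then 2 * a * complex_of_real b * c (n - 1) m else 0)
          + (if n = 2 \<and> m = 0 then (complex_of_real b)^2 else 0))"

text \<open>The one-parameter family of coefficients of the context: c k m = tilde c_{2k-1,m}.\<close>
definition dP3_coeffs :: "complex \<Rightarrow> real \<Rightarrow> (nat \<Rightarrow> int \<Rightarrow> complex) \<Rightarrow> bool" where
  "dP3_coeffs a b c \<longleftrightarrow>
     c 0 0 = 0 \<and> c 0 1 = 0 \<and> c 0 2 = - 1/4 \<and>
     (\<forall>k m. m < - 2 * int (k div 2) \<longrightarrow> c k m = 0) \<and>
     dP3_formal a b c"

end

theory Submission
  imports Defs "HOL-Computational_Algebra.Formal_Power_Series"
begin

(* Collecting the coefficients on the j-th diagonal, c k (j - k) for k = 0, 1, 2, ..., into a power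
   series in x = tau^2 turns the formal equation, order by order in ln tau, into equations for
   these series.  The leading diagonal F = sum_k c k (-k) x^k satisfies the Liouville-type equation
   F theta^2 F - (theta F)^2 + 8 F^3 = 0, where theta x^k = (2k-1) x^k.  With F_0 = F_1 = 0 and
   F_2 = C <> 0 it has at most one solution: if H_n is the lowest nonzero coefficient of the
   difference of two solutions, the x^(n+2) coefficient of the difference of the equations is
   C (2n-4)^2 H_n.  One solution is C x^2 / (1 + C x^2/4)^2.  If C = 0, then a^2 = -1, and at the
   lowest nonzero coefficient F_n the equation for the next diagonal reads 2ab n (n-2) F_n = 0,
   so F = 0.  The value C = -b^2 (a^2+1)/4 comes from the equation at the two lowest orders. *)

unbundle fps_syntax

definition fps_euler :: "'a::comm_ring_1 fps \<Rightarrow> 'a fps" where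
  "fps_euler A = fps_X * fps_deriv A"

(* tau d/dtau acting on sum_k A_k tau^(2k-1), written in the variable x = tau^2. *)
definition fps_theta :: "'a::comm_ring_1 fps \<Rightarrow> 'a fps" where
  "fps_theta A = 2 * fps_euler A - A"

lemma fps_euler_nth [simp]: "fps_euler A $ n = of_nat n * A $ n"
  by (cases n) (simp_all add: fps_euler_def)

lemma fps_theta_nth [simp]: "fps_theta A $ n = (2 * of_nat n - 1) * A $ n"
  by (simp add: fps_theta_def numeral_fps_const algebra_simps)

lemma fps_euler_add: "fps_euler (A + B) = fps_euler A + fps_euler B"
  by (simp add: fps_euler_def algebra_simps)

lemma fps_euler_diff: "fps_euler (A - B) = fps_euler A - fps_euler B"
  by (simp add: fps_euler_def algebra_simps)

lemma fps_euler_mult: "fps_euler (A * B) = fps_euler A * B + A * fps_euler B"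
  by (simp add: fps_euler_def algebra_simps)

lemma fps_euler_one [simp]: "fps_euler 1 = 0"
  by (simp add: fps_euler_def)

lemma fps_euler_numeral [simp]: "fps_euler (numeral k) = 0"
  by (simp add: fps_euler_def)

lemma fps_theta_add: "fps_theta (A + B) = fps_theta A + fps_theta B"
  by (simp add: fps_theta_def fps_euler_add algebra_simps)

lemma fps_mult_vanish_below:
  fixes A B :: "'a::{comm_monoid_add,mult_zero} fps"
  assumes A: "\<forall>k<s. A $ k = 0" and B: "\<forall>k<t. B $ k = 0"
  shows "\<forall>n<s + t. (A * B) $ n = 0"
  unfolding fps_mult_nth
proof (intro allI impI sum.neutral ballI)
  fix n i assume "n < s + t" "i \<in> {0..n}"
  then have "i < s \<or> n - i < t" by auto
  then show "A $ i * B $ (n - i) = 0" using A B by auto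
qed

lemma fps_mult_nth_lowest:
  fixes A B :: "'a::{comm_monoid_add,mult_zero} fps"
  assumes A: "\<forall>k<s. A $ k = 0" and B: "\<forall>k<t. B $ k = 0"
  shows "(A * B) $ (s + t) = A $ s * B $ t"
proof -
  have "A $ i * B $ (s + t - i) = 0" if "i \<noteq> s" "i \<le> s + t" for i
  proof -
    have "i < s \<or> s + t - i < t" using that by auto
    then show ?thesis using A B by auto
  qed
  then have "(A * B) $ (s + t) = (\<Sum>i=0..s + t. if i = s then A $ s * B $ t else 0)"
    unfolding fps_mult_nth by (intro sum.cong) auto
  then show ?thesis by simp
qed

(* liouville_op F = 0 becomes theta^2 (log F) = -8 F after dividing by F^2. *)
definition liouville_op :: "'a::comm_ring_1 fps \<Rightarrow> 'a fps" where
  "liouville_op F = F * fps_theta (fps_theta F) - fps_theta F * fps_theta F + 8 * F * F * F"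

lemma liouville_op_add_nth:
  fixes G H :: "'a::comm_ring_1 fps"
  assumes G_low: "\<forall>k<2. G $ k = 0" and H_low: "\<forall>k<n. H $ k = 0" and n3: "n \<ge> 3"
  shows "(liouville_op (G + H) - liouville_op G) $ (n + 2) = G $ 2 * H $ n * (2 * of_nat n - 4) ^ 2"
proof -
  let ?T = fps_theta
  have "liouville_op (G + H) - liouville_op G
      = G * ?T (?T H) + H * ?T (?T G) + H * ?T (?T H) - 2 * (?T G * ?T H) - ?T H * ?T H
        + 8 * (3 * (G * G * H) + 3 * (G * H * H) + H * H * H)"
    unfolding liouville_op_def by (simp add: fps_theta_add algebra_simps)
  then have coeff: "(liouville_op (G + H) - liouville_op G) $ (n + 2)
      = (G * ?T (?T H)) $ (2 + n) + (H * ?T (?T G)) $ (n + 2) + (H * ?T (?T H)) $ (n + 2)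
        - 2 * (?T G * ?T H) $ (2 + n) - (?T H * ?T H) $ (n + 2)
        + 8 * (3 * (G * G * H) $ (n + 2) + 3 * (G * H * H) $ (n + 2) + (H * H * H) $ (n + 2))"
    by (simp only: fps_add_nth fps_sub_nth numeral_fps_const fps_mult_left_const_nth add.commute[of 2 n])
  have G_low': "\<forall>k<2. ?T G $ k = 0" "\<forall>k<2. ?T (?T G) $ k = 0"
    and H_low': "\<forall>k<n. ?T H $ k = 0" "\<forall>k<n. ?T (?T H) $ k = 0"
    using G_low H_low by simp_all
  have lowest: "(G * ?T (?T H)) $ (2 + n) = G $ 2 * ((2 * of_nat n - 1) ^ 2 * H $ n)"
    "(H * ?T (?T G)) $ (n + 2) = H $ n * (9 * G $ 2)"
    "(?T G * ?T H) $ (2 + n) = 3 * G $ 2 * ((2 * of_nat n - 1) * H $ n)"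
    unfolding fps_mult_nth_lowest[OF G_low H_low'(2)] fps_mult_nth_lowest[OF H_low G_low'(2)]
      fps_mult_nth_lowest[OF G_low'(1) H_low'(1)]
    by (simp_all add: power2_eq_square)
  have "n + 2 < n + n" "n + 2 < 2 + 2 + n" "n + 2 < 2 + n + n" "n + 2 < n + n + n"
    using n3 by linarith+
  then have vanishing: "(H * ?T (?T H)) $ (n + 2) = 0" "(?T H * ?T H) $ (n + 2) = 0"
    "(G * G * H) $ (n + 2) = 0" "(G * H * H) $ (n + 2) = 0" "(H * H * H) $ (n + 2) = 0"
    using fps_mult_vanish_below[OF H_low H_low'(2)] fps_mult_vanish_below[OF H_low'(1) H_low'(1)]
      fps_mult_vanish_below[OF fps_mult_vanish_below[OF G_low G_low] H_low]
      fps_mult_vanish_below[OF fps_mult_vanish_below[OF G_low H_low] H_low]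
      fps_mult_vanish_below[OF fps_mult_vanish_below[OF H_low H_low] H_low]
    by blast+
  show ?thesis
    unfolding coeff lowest vanishing by (simp add: algebra_simps power2_eq_square)
qed

lemma liouville_op_eq_0_unique:
  fixes F G :: "'a::field_char_0 fps"
  assumes F: "liouville_op F = 0" and G: "liouville_op G = 0"
    and FG: "F $ 0 = G $ 0" "F $ 1 = G $ 1" "F $ 2 = G $ 2"
    and G_low: "\<forall>k<2. G $ k = 0" and G2: "G $ 2 \<noteq> 0"
  shows "F = G"
proof (rule ccontr)
  define H where "H = F - G"
  define n where "n = subdegree H"
  assume "F \<noteq> G"
  then have "H \<noteq> 0" by (simp add: H_def)
  then have Hn: "H $ n \<noteq> 0" unfolding n_def by (rule nth_subdegree_nonzero)
  have H_low: "\<forall>k<n. H $ k = 0" unfolding n_def using nth_less_subdegree_zero by blast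
  have n3: "n \<ge> 3"
  proof (rule ccontr)
    assume "\<not> n \<ge> 3"
    then have "n = 0 \<or> n = 1 \<or> n = 2" by linarith
    then show False using Hn FG by (auto simp: H_def)
  qed
  have "G $ 2 * H $ n * (2 * of_nat n - 4) ^ 2 = 0"
    using liouville_op_add_nth[OF G_low H_low n3] F G by (simp add: H_def)
  moreover have "(2 * of_nat n - 4 :: 'a) \<noteq> 0"
  proof
    assume "(2 * of_nat n - 4 :: 'a) = 0"
    then have "of_nat (2 * n) = (of_nat 4 :: 'a)" by simp
    then show False using n3 by (simp only: of_nat_eq_iff)
  qed
  ultimately show False using G2 Hn by simp
qed

definition liouville_sol :: "'a::field \<Rightarrow> 'a fps" where
  "liouville_sol C =
     Abs_fps (\<lambda>n. if even n then (- 1/4) ^ (n div 2 - 1) * of_nat (n div 2) * C ^ (n div 2) else 0)"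

lemma liouville_sol_nth_even: "liouville_sol C $ (2 * p) = (- 1/4) ^ (p - 1) * of_nat p * C ^ p"
  by (simp add: liouville_sol_def)

lemma liouville_sol_nth_odd: "odd n \<Longrightarrow> liouville_sol C $ n = 0"
  by (simp add: liouville_sol_def)

lemma liouville_sol_recurrence:
  fixes C :: "'a::field_char_0"
  shows "liouville_sol C $ (n + 4) + C / 2 * liouville_sol C $ (n + 2) + C ^ 2 / 16 * liouville_sol C $ n = 0"
proof (cases "even n")
  case False
  then show ?thesis by (simp add: liouville_sol_nth_odd)
next
  case True
  then obtain q where q: "n = 2 * q" by blast
  show ?thesis
  proof (cases q)
    case 0
    then show ?thesis using q by (simp add: liouville_sol_def power2_eq_square)
  next
    case (Suc r)
    define u where "u = (- 1/4) ^ r * C ^ (r + 1)"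
    have idx: "n + 4 = 2 * (r + 3)" "n + 2 = 2 * (r + 2)" "n = 2 * (r + 1)"
      using q Suc by simp_all
    have g4: "liouville_sol C $ (n + 4) = u * C ^ 2 / 16 * of_nat (r + 3)"
      unfolding idx(1) liouville_sol_nth_even u_def
      by (simp add: power_add power2_eq_square power3_eq_cube mult_ac)
    have g2: "liouville_sol C $ (n + 2) = - u * C / 4 * of_nat (r + 2)"
      unfolding idx(2) liouville_sol_nth_even u_def by (simp add: power_add mult_ac)
    have g0: "liouville_sol C $ n = u * of_nat (r + 1)"
      unfolding idx(3) liouville_sol_nth_even u_def by (simp add: mult_ac)
    show ?thesis
      unfolding g4 g2 g0 by (simp add: field_simps power2_eq_square)
  qed
qed

lemma liouville_sol_mult_denom:
  fixes C :: "'a::field_char_0"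
  shows "(1 + fps_const (C / 4) * fps_X ^ 2) ^ 2 * liouville_sol C = fps_const C * fps_X ^ 2"
proof (rule fps_ext)
  fix n
  let ?A = "fps_const (C / 4) * fps_X ^ 2"
  let ?g = "\<lambda>k. liouville_sol C $ k"
  have A: "(?A * f) $ k = (if k < 2 then 0 else C / 4 * f $ (k - 2))" for f k
    by (simp add: mult.assoc fps_X_power_mult_nth)
  have "(1 + ?A) ^ 2 * liouville_sol C
      = liouville_sol C + fps_const 2 * (?A * liouville_sol C) + ?A * (?A * liouville_sol C)"
    by (simp add: power2_eq_square algebra_simps numeral_fps_const)
  then have "((1 + ?A) ^ 2 * liouville_sol C) $ n
      = ?g n + 2 * (?A * liouville_sol C) $ n + (?A * (?A * liouville_sol C)) $ n"
    by (simp only: fps_add_nth fps_mult_left_const_nth)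
  also have "\<dots> = ?g n + (if n < 2 then 0 else C / 2 * ?g (n - 2))
      + (if n < 4 then 0 else C ^ 2 / 16 * ?g (n - 4))"
    unfolding A by (auto simp: power2_eq_square)
  also have "\<dots> = (if n = 2 then C else 0)"
  proof (cases "n < 4")
    case True
    then have "n = 0 \<or> n = 1 \<or> n = 2 \<or> n = 3" by auto
    then show ?thesis by (auto simp: liouville_sol_def)
  next
    case False
    then obtain m where "n = m + 4" by (metis add.commute le_Suc_ex not_less)
    then show ?thesis using liouville_sol_recurrence[of C m] by simp
  qed
  also have "\<dots> = (fps_const C * fps_X ^ 2) $ n" by simp
  finally show "((1 + ?A) ^ 2 * liouville_sol C) $ n = (fps_const C * fps_X ^ 2) $ n" .
qed

lemma liouville_op_liouville_sol:
  fixes C :: "'a::field_char_0"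
  shows "liouville_op (liouville_sol C) = 0"
proof -
  let ?D = fps_euler
  define q where "q = 1 + fps_const (C / 4) * fps_X ^ 2"
  define g where "g = liouville_sol C"
  have Dq: "?D q = 2 * (q - 1)"
    by (rule fps_ext) (simp add: q_def numeral_fps_const)
  have h0: "q * q * g = 4 * (q - 1)"
  proof -
    have "q * q * g = fps_const C * fps_X ^ 2"
      using liouville_sol_mult_denom[of C] by (simp add: q_def g_def power2_eq_square)
    also have "\<dots> = 4 * (q - 1)"
      by (rule fps_ext) (simp add: q_def numeral_fps_const)
    finally show ?thesis .
  qed
  have h1: "4 * (q - 1) * q * g + q * q * ?D g = 8 * (q - 1)"
    using arg_cong[where f = ?D, OF h0]
    by (simp add: fps_euler_mult fps_euler_diff Dq algebra_simps)
  have h2: "4 * (?D q * (q - 1) * g + q * ?D q * g + q * (q - 1) * ?D g) + 2 * q * ?D q * ?D g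
      + q * q * ?D (?D g) = 8 * ?D q"
    using arg_cong[where f = ?D, OF h1]
    by (simp add: fps_euler_mult fps_euler_diff fps_euler_add algebra_simps)
  (* h0, h1, h2 give g, D g and D (D g) as rational functions of q *)
  have "q ^ 6 * (g * ?D (?D g) - ?D g * ?D g + 2 * g * g * g) = 0"
    using h0 h1 h2 unfolding Dq by algebra
  moreover have "q \<noteq> 0"
  proof
    assume "q = 0"
    then have "q $ 0 = 0" by simp
    then show False by (simp add: q_def)
  qed
  ultimately have "g * ?D (?D g) - ?D g * ?D g + 2 * g * g * g = 0" by simp
  moreover have "fps_theta g = 2 * ?D g - g" "fps_theta (fps_theta g) = 4 * ?D (?D g) - 4 * ?D g + g"
    by (simp_all add: fps_theta_def fps_euler_diff fps_euler_mult algebra_simps)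
  ultimately show ?thesis
    unfolding liouville_op_def g_def[symmetric] by algebra
qed

lemma liouville_sol_neg_quarter_nth_even:
  fixes y :: "'a::field_char_0"
  assumes "l \<ge> 1"
  shows "liouville_sol (- y / 4) $ (2 * l) = - of_nat l * y ^ l / 4 ^ (2 * l - 1)"
proof -
  obtain j where l: "l = Suc j" using assms by (cases l) auto
  have "liouville_sol (- y / 4) $ (2 * l) = of_nat l * ((- 1 / 4) ^ j * (- y / 4) ^ Suc j)"
    unfolding liouville_sol_nth_even l by (simp only: diff_Suc_1 mult_ac)
  also have "(- 1 / 4) ^ j * (- y / 4) ^ Suc j = - (y ^ Suc j / 4 ^ (2 * j + 1))"
    by (simp add: power_divide power_minus' power_add power_mult_distrib mult_2_right field_simps)
  finally show ?thesis by (simp add: l field_simps)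
qed

(* For u with diagonals F and E, the diagonal 1 of u theta^2 u - (theta u)^2 + 8 u^3; its diagonal 0
   is liouville_op F. *)
definition subleading_op :: "'a::comm_ring_1 fps \<Rightarrow> 'a fps \<Rightarrow> 'a fps" where
  "subleading_op F E = F * fps_theta (fps_theta E + fps_euler F) + F * fps_euler (fps_theta F)
     + E * fps_theta (fps_theta F) - 2 * (fps_theta F * (fps_theta E + fps_euler F)) + 24 * (F * F * E)"

lemma subleading_op_nth:
  fixes F E :: "'a::comm_ring_1 fps"
  assumes F_low: "\<forall>k<n. F $ k = 0" and n2: "n \<ge> 2" and E0: "E $ 0 = 0"
  shows "subleading_op F E $ (n + 1) = 4 * (of_nat n - 1) ^ 2 * E $ 1 * F $ n"
proof -
  let ?T = fps_theta and ?D = fps_euler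
  define Z where "Z = ?T E + ?D F"
  have coeff: "subleading_op F E $ (n + 1) = (F * ?T Z) $ (n + 1) + (F * ?D (?T F)) $ (n + 1)
      + (E * ?T (?T F)) $ (1 + n) - 2 * (?T F * Z) $ (n + 1) + 24 * (F * F * E) $ (n + 1)"
    unfolding subleading_op_def Z_def[symmetric]
    by (simp only: fps_add_nth fps_sub_nth numeral_fps_const fps_mult_left_const_nth add.commute[of 1 n])
  have E_low: "\<forall>k<1. E $ k = 0" using E0 by simp
  have F_low': "\<forall>k<n. ?T F $ k = 0" "\<forall>k<n. ?T (?T F) $ k = 0" "\<forall>k<n. ?D (?T F) $ k = 0"
    using F_low by simp_all
  have "F $ 1 = 0" using F_low n2 by simp
  then have Z_low: "\<forall>k<1. Z $ k = 0" "\<forall>k<1. ?T Z $ k = 0" and Z1: "Z $ 1 = E $ 1" "?T Z $ 1 = E $ 1"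
    using E0 by (simp_all add: Z_def)
  have lowest: "(F * ?T Z) $ (n + 1) = F $ n * E $ 1"
    "(E * ?T (?T F)) $ (1 + n) = E $ 1 * ((2 * of_nat n - 1) ^ 2 * F $ n)"
    "(?T F * Z) $ (n + 1) = (2 * of_nat n - 1) * F $ n * E $ 1"
    unfolding fps_mult_nth_lowest[OF F_low Z_low(2)] fps_mult_nth_lowest[OF E_low F_low'(2)]
      fps_mult_nth_lowest[OF F_low'(1) Z_low(1)] Z1
    by (simp_all add: power2_eq_square)
  have "n + 1 < n + n" "n + 1 < n + n + 1" using n2 by linarith+
  then have vanishing: "(F * ?D (?T F)) $ (n + 1) = 0" "(F * F * E) $ (n + 1) = 0"
    using fps_mult_vanish_below[OF F_low F_low'(3)]
      fps_mult_vanish_below[OF fps_mult_vanish_below[OF F_low F_low] E_low] by blast+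
  show ?thesis
    unfolding coeff lowest vanishing by (simp add: algebra_simps power2_eq_square)
qed

definition diag_supported :: "(nat \<Rightarrow> int \<Rightarrow> complex) \<Rightarrow> bool" where
  "diag_supported F \<longleftrightarrow> (\<forall>k m. m < - int k \<longrightarrow> F k m = 0)"

definition diag :: "nat \<Rightarrow> (nat \<Rightarrow> int \<Rightarrow> complex) \<Rightarrow> complex fps" where
  "diag j F = Abs_fps (\<lambda>k. F k (int j - int k))"

lemma diag_nth [simp]: "diag j F $ k = F k (int j - int k)"
  by (simp add: diag_def)

lemma diag_supportedD: "diag_supported F \<Longrightarrow> m < - int k \<Longrightarrow> F k m = 0"
  unfolding diag_supported_def by blast

lemma diag_supported_theta_op: "diag_supported F \<Longrightarrow> diag_supported (theta_op F)"
  unfolding diag_supported_def theta_op_def by auto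

lemma diag_supported_gconv:
  assumes F: "diag_supported F" and G: "diag_supported G"
  shows "diag_supported (gconv F G)"
  unfolding diag_supported_def gconv_def
proof (intro allI impI sum.neutral ballI)
  fix n m k i assume m: "m < - int n" and k: "k \<in> {..n}"
  show "F k i * G (n - k) (m - i) = 0"
  proof (cases "i < - int k")
    case False
    then have "m - i < - int (n - k)" using m k by auto
    then show ?thesis using diag_supportedD[OF G] by simp
  qed (simp add: diag_supportedD[OF F])
qed

lemma diag_gconv:
  assumes F: "diag_supported F" and G: "diag_supported G"
  shows "diag j (gconv F G) = (\<Sum>i\<le>j. diag i F * diag (j - i) G)"
proof (rule fps_ext)
  fix n
  let ?t = "\<lambda>k i. F k (int i - int k) * G (n - k) (int (j - i) - int (n - k))"
  have "(\<Sum>m\<in>{- int n..int j}. F k m * G (n - k) (int j - int n - m)) = (\<Sum>i\<le>j. ?t k i)"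
    if k: "k \<le> n" for k
  proof -
    have "(\<Sum>m\<in>{- int n..int j}. F k m * G (n - k) (int j - int n - m))
        = (\<Sum>m\<in>{- int k..int j - int k}. F k m * G (n - k) (int j - int n - m))"
    proof (rule sum.mono_neutral_right)
      show "\<forall>m\<in>{- int n..int j} - {- int k..int j - int k}. F k m * G (n - k) (int j - int n - m) = 0"
      proof
        fix m assume "m \<in> {- int n..int j} - {- int k..int j - int k}"
        then have "m < - int k \<or> int j - int n - m < - int (n - k)" using k by auto
        then show "F k m * G (n - k) (int j - int n - m) = 0"
          using diag_supportedD[OF F] diag_supportedD[OF G] by auto
      qed
    qed (use k in auto)
    also have "\<dots> = (\<Sum>i\<le>j. ?t k i)"
      by (rule sum.reindex_bij_witness[of _ "\<lambda>i. int i - int k" "\<lambda>m. nat (m + int k)"])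
        (use k in \<open>auto simp: of_nat_diff algebra_simps\<close>)
    finally show ?thesis .
  qed
  then have "diag j (gconv F G) $ n = (\<Sum>k\<le>n. \<Sum>i\<le>j. ?t k i)"
    by (simp add: gconv_def)
  also have "\<dots> = (\<Sum>i\<le>j. \<Sum>k\<le>n. ?t k i)"
    by (rule sum.swap)
  also have "\<dots> = (\<Sum>i\<le>j. diag i F * diag (j - i) G) $ n"
    by (simp add: fps_sum_nth fps_mult_nth atLeast0AtMost)
  finally show "diag j (gconv F G) $ n = (\<Sum>i\<le>j. diag i F * diag (j - i) G) $ n" .
qed

lemma diag_0_theta_op: "diag_supported F \<Longrightarrow> diag 0 (theta_op F) = fps_theta (diag 0 F)"
  by (rule fps_ext) (simp add: theta_op_def diag_supportedD)

lemma diag_Suc_theta_op: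
  "diag (Suc j) (theta_op F) = fps_theta (diag (Suc j) F) + fps_euler (diag j F) - of_nat j * diag j F"
  by (rule fps_ext) (simp add: theta_op_def algebra_simps)

lemma Icc_int_eq_insert: "(i::int) \<le> j \<Longrightarrow> {i..j} = insert i {i + 1..j}"
  by auto

lemma dP3_coeffs_diag_supported: "dP3_coeffs a b c \<Longrightarrow> diag_supported c"
  unfolding dP3_coeffs_def diag_supported_def
proof (intro allI impI, elim conjE)
  fix k m assume "m < - int k" and "\<forall>k m. m < - 2 * int (k div 2) \<longrightarrow> c k m = 0"
  moreover have "2 * int (k div 2) \<le> int k" by linarith
  ultimately show "c k m = 0" by force
qed

lemma dP3_coeff_1_0:
  assumes H: "dP3_coeffs a b c"
  shows "c 1 0 = a * b / 2"
proof -
  have supp: "c k m = 0" if "m < - 2 * int (k div 2)" for k m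
    using H that unfolding dP3_coeffs_def by blast
  have c0: "c 0 0 = 0" "c 0 1 = 0" "c 0 2 = - 1/4" and F: "dP3_formal a b c"
    using H unfolding dP3_coeffs_def by auto
  have "gconv c (theta_op (theta_op c)) 1 2 - gconv (theta_op c) (theta_op c) 1 2
      = - 8 * gconv (gconv c c) c 1 2 + 2 * a * b * c 0 2"
    using F[unfolded dP3_formal_def, rule_format, of 1 2] by simp
  then show ?thesis
    unfolding gconv_def theta_op_def by (simp add: Icc_int_eq_insert c0 supp)
qed

lemma dP3_coeff_2_m2:
  assumes H: "dP3_coeffs a b c"
  shows "c 2 (-2) = - (b * b * (a^2 + 1)) / 4"
proof -
  have supp: "c k m = 0" if "m < - 2 * int (k div 2)" for k m
    using H that unfolding dP3_coeffs_def by blast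
  have c0: "c 0 0 = 0" "c 0 1 = 0" "c 0 2 = - 1/4" and F: "dP3_formal a b c"
    using H unfolding dP3_coeffs_def by auto
  have c10: "c (Suc 0) 0 = a * b / 2"
    using dP3_coeff_1_0[OF H] by simp
  have "gconv c (theta_op (theta_op c)) 2 0 - gconv (theta_op c) (theta_op c) 2 0
      = - 8 * gconv (gconv c c) c 2 0 + 2 * a * b * c 1 0 + b^2"
    using F[unfolded dP3_formal_def, rule_format, of 2 0] by simp
  then have "- (4 * c 2 (-2)) = b * b * (a^2 + 1)"
    unfolding gconv_def theta_op_def
    by (simp add: Icc_int_eq_insert atMost_nat_numeral c0 c10 supp algebra_simps power2_eq_square)
  then show ?thesis by algebra
qed

lemma dP3_diag_0:
  assumes H: "dP3_coeffs a b c"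
  shows "liouville_op (diag 0 c) = 0"
proof -
  have s0: "diag_supported c" using dP3_coeffs_diag_supported[OF H] .
  note s1 = diag_supported_theta_op[OF s0]
  note s2 = diag_supported_theta_op[OF s1]
  note s3 = diag_supported_gconv[OF s0 s0]
  have F: "dP3_formal a b c" using H unfolding dP3_coeffs_def by blast
  have "diag 0 (gconv c (theta_op (theta_op c))) - diag 0 (gconv (theta_op c) (theta_op c))
      = - 8 * diag 0 (gconv (gconv c c) c)"
  proof (rule fps_ext)
    fix n
    have "n \<ge> 1 \<Longrightarrow> c (n - 1) (- int n) = 0" by (rule diag_supportedD[OF s0]) auto
    then show "(diag 0 (gconv c (theta_op (theta_op c))) - diag 0 (gconv (theta_op c) (theta_op c))) $ n
        = (- 8 * diag 0 (gconv (gconv c c) c)) $ n"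
      using F[unfolded dP3_formal_def, rule_format, of n "- int n"] by (simp add: numeral_fps_const)
  qed
  then show ?thesis
    by (simp add: liouville_op_def diag_gconv diag_0_theta_op s0 s1 s2 s3 algebra_simps)
qed

lemma dP3_diag_1:
  assumes H: "dP3_coeffs a b c"
  shows "subleading_op (diag 0 c) (diag 1 c) = fps_const (2 * a * b) * (fps_X * diag 0 c)"
proof -
  define F where "F = diag 0 c"
  define E where "E = diag 1 c"
  have s0: "diag_supported c" using dP3_coeffs_diag_supported[OF H] .
  note s1 = diag_supported_theta_op[OF s0]
  note s2 = diag_supported_theta_op[OF s1]
  note s3 = diag_supported_gconv[OF s0 s0]
  have formal: "dP3_formal a b c" using H unfolding dP3_coeffs_def by blast
  have "diag 1 (gconv c (theta_op (theta_op c))) - diag 1 (gconv (theta_op c) (theta_op c))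
      = - 8 * diag 1 (gconv (gconv c c) c) + fps_const (2 * a * b) * (fps_X * F)"
  proof (rule fps_ext)
    fix n
    have "n \<ge> 1 \<Longrightarrow> c (n - 1) (1 - int n) = F $ (n - 1)" by (simp add: F_def of_nat_diff)
    then show "(diag 1 (gconv c (theta_op (theta_op c))) - diag 1 (gconv (theta_op c) (theta_op c))) $ n
        = (- 8 * diag 1 (gconv (gconv c c) c) + fps_const (2 * a * b) * (fps_X * F)) $ n"
      using formal[unfolded dP3_formal_def, rule_format, of n "1 - int n"]
      by (auto simp: numeral_fps_const fps_X_mult_nth)
  qed
  moreover have "diag 1 (theta_op c) = fps_theta E + fps_euler F"
    using diag_Suc_theta_op[of 0 c] by (simp add: E_def F_def)
  moreover have "diag 1 (theta_op (theta_op c))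
      = fps_theta (fps_theta E + fps_euler F) + fps_euler (fps_theta F)"
    using diag_Suc_theta_op[of 0 "theta_op c"] calculation(2) by (simp add: F_def diag_0_theta_op s0)
  moreover have "diag (Suc 0) c = E" by (simp add: E_def)
  ultimately show ?thesis
    unfolding subleading_op_def F_def[symmetric] E_def[symmetric]
    by (simp add: diag_gconv diag_0_theta_op s0 s1 s2 s3 F_def[symmetric] algebra_simps)
qed

lemma dP3_diag_0_eq_0:
  assumes b: "b \<noteq> 0" and H: "dP3_coeffs a b c" and C0: "c 2 (-2) = 0"
  shows "diag 0 c = 0"
proof (rule ccontr)
  define F where "F = diag 0 c"
  define n where "n = subdegree F"
  assume "diag 0 c \<noteq> 0"
  then have Fn: "F $ n \<noteq> 0" unfolding n_def F_def by (rule nth_subdegree_nonzero)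
  have F_low: "\<forall>k<n. F $ k = 0" unfolding n_def using nth_less_subdegree_zero by blast
  have "a^2 + 1 = 0" using dP3_coeff_2_m2[OF H] C0 b by simp
  then have ab: "a * b \<noteq> 0" using b by auto
  have c_low: "c 0 0 = 0" "c 1 (-1) = 0" "c 0 1 = 0"
    using H unfolding dP3_coeffs_def by auto
  have n3: "n \<ge> 3"
  proof (rule ccontr)
    assume "\<not> n \<ge> 3"
    then have "n = 0 \<or> n = 1 \<or> n = 2" by linarith
    then show False using Fn c_low C0 by (auto simp: F_def)
  qed
  have E: "diag 1 c $ 0 = 0" "diag 1 c $ 1 = a * b / 2"
    using c_low dP3_coeff_1_0[OF H] by simp_all
  have "subleading_op F (diag 1 c) $ (n + 1) = 4 * (of_nat n - 1) ^ 2 * (a * b / 2) * F $ n"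
    using subleading_op_nth[OF F_low _ E(1), unfolded E(2)] n3 by simp
  moreover have "subleading_op F (diag 1 c) $ (n + 1) = 2 * a * b * F $ n"
    using dP3_diag_1[OF H] unfolding F_def[symmetric] by (simp add: fps_X_mult_nth)
  ultimately have "4 * (of_nat n - 1) ^ 2 * (a * b / 2) * F $ n = 2 * a * b * F $ n"
    by simp
  then have "2 * (a * b) * F $ n * (of_nat n * (of_nat n - 2)) = 0"
    by (simp add: algebra_simps power2_eq_square)
  moreover have "(of_nat n - 2 :: complex) \<noteq> 0"
  proof
    assume "(of_nat n - 2 :: complex) = 0"
    then have "of_nat n = (of_nat 2 :: complex)" by simp
    then show False using n3 by (simp only: of_nat_eq_iff)
  qed
  ultimately show False using ab Fn n3 by simp
qed

lemma dP3_diag_0_eq_liouville_sol: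
  assumes b: "b \<noteq> 0" and H: "dP3_coeffs a b c"
  shows "diag 0 c = liouville_sol (c 2 (-2))"
proof (cases "c 2 (-2) = 0")
  case True
  then show ?thesis
    using dP3_diag_0_eq_0[OF b H] by (auto intro!: fps_ext simp: liouville_sol_def)
next
  case False
  have "c 0 0 = 0" "c 1 (-1) = 0"
    using H unfolding dP3_coeffs_def by auto
  then show ?thesis
    by (intro liouville_op_eq_0_unique[OF dP3_diag_0[OF H] liouville_op_liouville_sol])
      (use False in \<open>auto simp: liouville_sol_def less_2_cases_iff\<close>)
qed

theorem mainTheorem4:
  fixes a :: complex and b :: real and c :: "nat \<Rightarrow> int \<Rightarrow> complex" and l :: nat
  assumes "b \<noteq> 0"
    and "dP3_coeffs a b c"
    and "l \<ge> 1"
  shows "c (2 * l - 1) (1 - 2 * int l) = 0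
       \<and> c (2 * l) (- 2 * int l) = (- 1/4) ^ (l - 1) * of_nat l * (c 2 (-2)) ^ l
       \<and> c (2 * l) (- 2 * int l)
           = - of_nat l * (complex_of_real b) ^ (2 * l) * (a^2 + 1) ^ l / 4 ^ (2 * l - 1)"
proof -
  have "c k m = 0" if "m < - 2 * int (k div 2)" for k m
    using assms(2) that unfolding dP3_coeffs_def by blast
  moreover have "(2 * l - 1) div 2 = l - 1" "1 - 2 * int l < - 2 * int (l - 1)"
    using assms(3) by auto
  ultimately have odd: "c (2 * l - 1) (1 - 2 * int l) = 0" by metis
  have diag: "c (2 * l) (- 2 * int l) = liouville_sol (c 2 (-2)) $ (2 * l)"
    using dP3_diag_0_eq_liouville_sol[OF assms(1,2)] diag_nth[of 0 c "2 * l"] by simp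
  then have even: "c (2 * l) (- 2 * int l) = (- 1/4) ^ (l - 1) * of_nat l * (c 2 (-2)) ^ l"
    by (simp add: liouville_sol_nth_even)
  have C: "c 2 (-2) = - (complex_of_real b ^ 2 * (a^2 + 1)) / 4"
    using dP3_coeff_2_m2[OF assms(2)] by (simp add: power2_eq_square)
  have "c (2 * l) (- 2 * int l) = - of_nat l * (complex_of_real b ^ 2 * (a^2 + 1)) ^ l / 4 ^ (2 * l - 1)"
    unfolding diag C by (rule liouville_sol_neg_quarter_nth_even[OF assms(3)])
  also have "\<dots> = - of_nat l * (complex_of_real b) ^ (2 * l) * (a^2 + 1) ^ l / 4 ^ (2 * l - 1)"
    by (simp add: power_mult_distrib power_mult)
  finally show ?thesis using odd even by blast
qed

end
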